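(* Let $\{(x_i,y_i)\}_{i=1}^n\subset\mathcal X\times\mathcal Y$ be a dataset and $\alpha\in(0,1)$. Let $F:\mathcal X\to\mathcal Y$ be a deterministic classifier and let $F'$ be a randomized classifier (for each $x$, $F'(x)$ is a $\mathcal Y$-valued random variable) whose average zero-one loss equals that of $F$, i.e. $$\frac1n\sum_{i=1}^n \Pr(F'(x_i)\neq y_i)=\frac1n\sum_{i=1}^n \mathbf 1_{\{F(x_i)\neq y_i\}}.$$ Define $$\mathrm{CVaR}_\alpha(F)=\max_{w\in\Delta_n,\ w_i\le\frac1{\alpha n}\ \forall i}\sum_{i=1}^n w_i\mathbf 1_{\{F(x_i)\neq y_i\}},\qquad \mathrm{CVaR}_\alpha(F')=\max_{w\in\Delta_n,\ w_i\le\frac1{\alpha n}\ \forall i}\sum_{i=1}^n w_i\Pr(F'(x_i)\neq y_i),$$ where $\Delta_n=\{w\in\mathbb R^n:w_i\ge0,\sum_iw_i=1\}$. Then $\mathrm{CVaR}_\alpha(F')\le \mathrm{CVaR}_\alpha(F)$.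
   Context: The $\alpha$-CVaR zero-one loss measures the average zero-one loss over the worst $\alpha$ fraction of the dataset; for a randomized classifier the per-sample loss is the probability of misclassification. *)

theory Defs
  imports "HOL-Probability.Probability"
begin

text \<open>Data indexed by 0..<n. Feasible weights: w in the simplex with w_i <= 1/(alpha n).\<close>
definition cvar_weights :: "nat \<Rightarrow> real \<Rightarrow> (nat \<Rightarrow> real) set" where
  "cvar_weights n \<alpha> = {w. (\<forall>i<n. 0 \<le> w i \<and> w i \<le> 1 / (\<alpha> * real n)) \<and> (\<Sum>i<n. w i) = 1}"

text \<open>CVaR of per-sample losses l: max (here Sup; the maximum is attained) of weighted loss.\<close>
definition cvar :: "nat \<Rightarrow> real \<Rightarrow> (nat \<Rightarrow> real) \<Rightarrow> real" where
  "cvar n \<alpha> l = Sup ((\<lambda>w. \<Sum>i<n. w i * l i) ` cvar_weights n \<alpha>)"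

definition zo_loss :: "('x \<Rightarrow> 'y) \<Rightarrow> (nat \<Rightarrow> 'x) \<Rightarrow> (nat \<Rightarrow> 'y) \<Rightarrow> nat \<Rightarrow> real" where
  "zo_loss F x y i = (if F (x i) \<noteq> y i then 1 else 0)"

text \<open>Misclassification probability of a randomized classifier (law of F'(x) is a probability measure on Y).\<close>
definition rand_loss :: "('x \<Rightarrow> 'y measure) \<Rightarrow> (nat \<Rightarrow> 'x) \<Rightarrow> (nat \<Rightarrow> 'y) \<Rightarrow> nat \<Rightarrow> real" where
  "rand_loss F' x y i = measure (F' (x i)) (space (F' (x i)) - {y i})"

end

theory Submission
  imports Defs
begin

text \<open>Any per-sample loss with values in \<open>[0,1]\<close> has CVaR at most \<open>min 1 (L / (\<alpha> n))\<close>, where \<open>L\<close> is the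
  total loss: the weighted sum is a convex combination of values \<open>\<le> 1\<close>, and each weight is
  at most \<open>1 / (\<alpha> n)\<close>. For zero-one losses this bound is attained, by spreading the mass
  \<open>1 / (\<alpha> n)\<close> over the misclassified samples (and the rest uniformly over the correctly
  classified ones) or, if there are at least \<open>\<alpha> n\<close> of them, by the uniform weight on them.
  Since the randomized and the deterministic classifier have the same total loss, the
  theorem follows.\<close>

lemma weighted_loss_le_one:
  assumes "w \<in> cvar_weights n \<alpha>" and "\<And>i. i < n \<Longrightarrow> l i \<le> 1"
  shows "(\<Sum>i<n. w i * l i) \<le> 1"
proof -
  have "(\<Sum>i<n. w i * l i) \<le> (\<Sum>i<n. w i)"
    using assms by (intro sum_mono) (auto simp: cvar_weights_def intro: mult_left_le)
  also have "\<dots> = 1"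
    using assms(1) by (simp add: cvar_weights_def)
  finally show ?thesis .
qed

lemma weighted_loss_le_mean:
  assumes "w \<in> cvar_weights n \<alpha>" and "\<And>i. i < n \<Longrightarrow> 0 \<le> l i"
  shows "(\<Sum>i<n. w i * l i) \<le> (\<Sum>i<n. l i) / (\<alpha> * real n)"
proof -
  have "w i * l i \<le> 1 / (\<alpha> * real n) * l i" if "i < n" for i
    using assms that by (intro mult_right_mono) (auto simp: cvar_weights_def)
  then have "(\<Sum>i<n. w i * l i) \<le> (\<Sum>i<n. 1 / (\<alpha> * real n) * l i)"
    by (meson lessThan_iff sum_mono)
  also have "\<dots> = (\<Sum>i<n. l i) / (\<alpha> * real n)"
    by (simp add: sum_divide_distrib)
  finally show ?thesis .
qed

lemma uniform_in_cvar_weights: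
  assumes "0 < \<alpha>" and "\<alpha> \<le> 1" and "0 < n"
  shows "(\<lambda>_. 1 / real n) \<in> cvar_weights n \<alpha>"
  using assms by (auto simp: cvar_weights_def frac_le)

lemma weighted_loss_le_cvar:
  assumes "w \<in> cvar_weights n \<alpha>" and "\<And>i. i < n \<Longrightarrow> l i \<le> 1"
  shows "(\<Sum>i<n. w i * l i) \<le> cvar n \<alpha> l"
  unfolding cvar_def
proof (rule cSup_upper)
  show "bdd_above ((\<lambda>w. \<Sum>i<n. w i * l i) ` cvar_weights n \<alpha>)"
    using weighted_loss_le_one assms(2) by (intro bdd_aboveI[of _ 1]) blast
qed (use assms(1) in blast)

lemma cvar_le_min_one_mean:
  assumes "0 < \<alpha>" and "\<alpha> \<le> 1" and "0 < n"
    and "\<And>i. i < n \<Longrightarrow> 0 \<le> l i" and "\<And>i. i < n \<Longrightarrow> l i \<le> 1"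
  shows "cvar n \<alpha> l \<le> min 1 ((\<Sum>i<n. l i) / (\<alpha> * real n))"
  unfolding cvar_def
proof (rule cSup_least)
  show "(\<lambda>w. \<Sum>i<n. w i * l i) ` cvar_weights n \<alpha> \<noteq> {}"
    using uniform_in_cvar_weights[OF assms(1-3)] by blast
next
  fix v assume "v \<in> (\<lambda>w. \<Sum>i<n. w i * l i) ` cvar_weights n \<alpha>"
  then obtain w where "w \<in> cvar_weights n \<alpha>" and "v = (\<Sum>i<n. w i * l i)"
    by blast
  with assms(4,5) show "v \<le> min 1 ((\<Sum>i<n. l i) / (\<alpha> * real n))"
    using weighted_loss_le_one weighted_loss_le_mean by simp
qed

lemma zero_one_loss_saturating_weight:
  fixes l :: "nat \<Rightarrow> real" and n :: nat and \<alpha> :: real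
  defines "S \<equiv> \<Sum>i<n. l i"
  assumes "\<And>i. i < n \<Longrightarrow> l i \<in> {0, 1}" and "0 < \<alpha>" and "0 < n"
    and "\<alpha> * real n \<le> S"
  obtains w where "w \<in> cvar_weights n \<alpha>" and "(\<Sum>i<n. w i * l i) = 1"
proof
  have S_pos: "0 < S"
    using assms(3-5) mult_pos_pos[of \<alpha> "real n"] by linarith
  have "0 \<le> l i / S" and "l i / S \<le> 1 / (\<alpha> * real n)" if "i < n" for i
  proof -
    show "0 \<le> l i / S"
      using assms(2)[OF that] S_pos by auto
    have "l i / S \<le> 1 / S"
      using assms(2)[OF that] S_pos by auto
    also have "\<dots> \<le> 1 / (\<alpha> * real n)"
      using assms(3-5) by (simp add: frac_le)
    finally show "l i / S \<le> 1 / (\<alpha> * real n)" .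
  qed
  then show "(\<lambda>i. l i / S) \<in> cvar_weights n \<alpha>"
    using S_pos by (simp add: cvar_weights_def S_def flip: sum_divide_distrib)
  have "l i / S * l i = l i / S" if "i < n" for i
    using assms(2)[OF that] by auto
  then have "(\<Sum>i<n. l i / S * l i) = (\<Sum>i<n. l i / S)"
    by (meson lessThan_iff sum.cong)
  also have "\<dots> = 1"
    using S_pos by (simp add: S_def flip: sum_divide_distrib)
  finally show "(\<Sum>i<n. l i / S * l i) = 1" .
qed

lemma zero_one_loss_spreading_weight:
  fixes l :: "nat \<Rightarrow> real" and n :: nat and \<alpha> :: real
  defines "S \<equiv> \<Sum>i<n. l i"
  assumes "\<And>i. i < n \<Longrightarrow> l i \<in> {0, 1}" and "0 < \<alpha>" and "\<alpha> \<le> 1"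
    and "S < \<alpha> * real n"
  obtains w where "w \<in> cvar_weights n \<alpha>" and "(\<Sum>i<n. w i * l i) = S / (\<alpha> * real n)"
proof
  define a where "a = 1 / (\<alpha> * real n)"
  define c where "c = (1 - S * a) / (real n - S)"
  have "0 \<le> S"
    unfolding S_def using assms(2) by (intro sum_nonneg) force
  then have n_pos: "0 < real n"
    using assms(3,5) zero_less_mult_pos[of \<alpha> "real n"] by linarith
  have "\<alpha> * real n \<le> real n"
    using assms(4) n_pos by simp
  then have gap_pos: "0 < real n - S"
    using assms(5) by linarith
  have "S * a < 1"
    using assms(3,5) n_pos by (simp add: a_def field_simps)
  then have c_nonneg: "0 \<le> c"
    using gap_pos by (simp add: c_def)
  have "1 - S * a \<le> (real n - S) * a"
    using assms(3,4) n_pos by (simp add: a_def field_simps)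
  then have c_le_a: "c \<le> a"
    using gap_pos by (simp add: c_def divide_le_eq mult.commute)
  have "(\<Sum>i<n. l i * a + (1 - l i) * c) = S * a + (real n - S) * c"
    by (simp add: S_def sum.distrib sum_subtractf flip: sum_distrib_right)
  also have "\<dots> = 1"
    using gap_pos by (simp add: c_def)
  moreover have "0 \<le> l i * a + (1 - l i) * c" and "l i * a + (1 - l i) * c \<le> a"
    if "i < n" for i
    using assms(2)[OF that] c_nonneg c_le_a by auto
  ultimately show "(\<lambda>i. l i * a + (1 - l i) * c) \<in> cvar_weights n \<alpha>"
    by (simp add: cvar_weights_def a_def)
  have "(l i * a + (1 - l i) * c) * l i = l i * a" if "i < n" for i
    using assms(2)[OF that] by auto
  then have "(\<Sum>i<n. (l i * a + (1 - l i) * c) * l i) = (\<Sum>i<n. l i * a)"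
    by (meson lessThan_iff sum.cong)
  then show "(\<Sum>i<n. (l i * a + (1 - l i) * c) * l i) = S / (\<alpha> * real n)"
    by (simp add: S_def a_def sum_divide_distrib)
qed

lemma cvar_zero_one_loss:
  assumes "\<And>i. i < n \<Longrightarrow> l i \<in> {0, 1}" and "0 < \<alpha>" and "\<alpha> \<le> 1" and "0 < n"
  shows "cvar n \<alpha> l = min 1 ((\<Sum>i<n. l i) / (\<alpha> * real n))"
proof (rule antisym)
  show "cvar n \<alpha> l \<le> min 1 ((\<Sum>i<n. l i) / (\<alpha> * real n))"
    using assms by (intro cvar_le_min_one_mean) force+
  have l_le_1: "l i \<le> 1" if "i < n" for i
    using assms(1)[OF that] by auto
  show "min 1 ((\<Sum>i<n. l i) / (\<alpha> * real n)) \<le> cvar n \<alpha> l"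
  proof (cases "\<alpha> * real n \<le> (\<Sum>i<n. l i)")
    case True
    obtain w where "w \<in> cvar_weights n \<alpha>" and "(\<Sum>i<n. w i * l i) = 1"
      using zero_one_loss_saturating_weight[OF assms(1,2,4) True] .
    with l_le_1 have "1 \<le> cvar n \<alpha> l"
      using weighted_loss_le_cvar[of w n \<alpha> l] by simp
    then show ?thesis
      by simp
  next
    case False
    then have "(\<Sum>i<n. l i) < \<alpha> * real n"
      by simp
    then obtain w where "w \<in> cvar_weights n \<alpha>"
      and "(\<Sum>i<n. w i * l i) = (\<Sum>i<n. l i) / (\<alpha> * real n)"
      using zero_one_loss_spreading_weight[where l = l and n = n and \<alpha> = \<alpha>, OF assms(1-3)]
      by blast
    with l_le_1 have "(\<Sum>i<n. l i) / (\<alpha> * real n) \<le> cvar n \<alpha> l"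
      using weighted_loss_le_cvar[of w n \<alpha> l] by simp
    then show ?thesis
      by simp
  qed
qed

lemma zo_loss_zero_one: "zo_loss F x y i \<in> {0, 1}"
  by (simp add: zo_loss_def)

lemma rand_loss_bounds:
  assumes "prob_space (F' (x i))"
  shows "0 \<le> rand_loss F' x y i" and "rand_loss F' x y i \<le> 1"
proof -
  interpret prob_space "F' (x i)"
    by (fact assms)
  show "0 \<le> rand_loss F' x y i" and "rand_loss F' x y i \<le> 1"
    by (simp_all add: rand_loss_def)
qed

theorem proposition2:
  fixes n :: nat and \<alpha> :: real
    and x :: "nat \<Rightarrow> 'x" and y :: "nat \<Rightarrow> 'y"
    and F :: "'x \<Rightarrow> 'y" and F' :: "'x \<Rightarrow> 'y measure"
  assumes "n \<ge> 1"
    and "0 < \<alpha>" and "\<alpha> < 1"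
    and "\<And>i. i < n \<Longrightarrow> prob_space (F' (x i))"
    and "\<And>i. i < n \<Longrightarrow> space (F' (x i)) - {y i} \<in> sets (F' (x i))"
    and "(1 / real n) * (\<Sum>i<n. rand_loss F' x y i) = (1 / real n) * (\<Sum>i<n. zo_loss F x y i)"
  shows "cvar n \<alpha> (rand_loss F' x y) \<le> cvar n \<alpha> (zo_loss F x y)"
proof -
  have n_pos: "0 < n" and \<alpha>_le_1: "\<alpha> \<le> 1"
    using assms(1,3) by simp_all
  have same_total: "(\<Sum>i<n. rand_loss F' x y i) = (\<Sum>i<n. zo_loss F x y i)"
    using assms(6) n_pos by simp
  have "0 \<le> rand_loss F' x y i" and "rand_loss F' x y i \<le> 1" if "i < n" for i
    using rand_loss_bounds assms(4)[OF that] by blast+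
  then have "cvar n \<alpha> (rand_loss F' x y)
      \<le> min 1 ((\<Sum>i<n. rand_loss F' x y i) / (\<alpha> * real n))"
    using assms(2) \<alpha>_le_1 n_pos by (intro cvar_le_min_one_mean)
  also have "\<dots> = cvar n \<alpha> (zo_loss F x y)"
    unfolding same_total using zo_loss_zero_one assms(2) \<alpha>_le_1 n_pos
    by (intro cvar_zero_one_loss[symmetric])
  finally show ?thesis .
qed

end
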